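(* Let $(x_K)_{K\ge1}\subseteq\{0,1\}^{\mathbb Z}$ be a coordinatewise non-increasing sequence with coordinatewise limit $x_\infty$, and suppose $(x_K)$ is good: there is an increasing sequence $(N_i)$ such that for every $K\in\mathbb N\cup\{\infty\}$, $x_K$ is quasi-generic along $(N_i)$ for some measure $\nu_K$ (i.e. $\frac1{N_i}\sum_{n\le N_i}\delta_{\sigma^nx_K}\to\nu_K$ weakly), and $\nu_K(1)\to\nu_\infty(1)$ as $K\to\infty$. Then $\nu_K\to\nu_\infty$ weakly.
   Context: $\sigma$ is the left shift on $\{0,1\}^{\mathbb Z}$; for a measure $\mu$ on $\{0,1\}^{\mathbb Z}$, $\mu(1)=\mu(\{x:x_0=1\})$. *)

theory Defs
  imports "HOL-Probability.Probability"
begin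

text \<open>Points of {0,1}^Z are functions int => bool (True = 1), with the product
topology (Function_Topology) and its Borel sigma-algebra.\<close>

type_synonym config = "int \<Rightarrow> bool"

definition shift :: "config \<Rightarrow> config" where
  "shift x = (\<lambda>m. x (m + 1))"

definition weak_conv :: "(nat \<Rightarrow> config measure) \<Rightarrow> config measure \<Rightarrow> bool" where
  "weak_conv \<mu> \<nu> \<longleftrightarrow>
     (\<forall>f :: config \<Rightarrow> real. continuous_on UNIV f \<longrightarrow> bounded (range f) \<longrightarrow>
        ((\<lambda>k. integral\<^sup>L (\<mu> k) f) \<longlongrightarrow> integral\<^sup>L \<nu> f) sequentially)"

definition quasi_generic_along :: "config \<Rightarrow> (nat \<Rightarrow> nat) \<Rightarrow> config measure \<Rightarrow> bool" where
  "quasi_generic_along x N \<nu> \<longleftrightarrow>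
     (\<forall>f :: config \<Rightarrow> real. continuous_on UNIV f \<longrightarrow> bounded (range f) \<longrightarrow>
        ((\<lambda>i. (\<Sum>n=1..N i. f ((shift ^^ n) x)) / real (N i)) \<longlongrightarrow> integral\<^sup>L \<nu> f) sequentially)"

definition borel_prob :: "config measure \<Rightarrow> bool" where
  "borel_prob \<nu> \<longleftrightarrow> prob_space \<nu> \<and> sets \<nu> = sets borel"

definition one_mass :: "config measure \<Rightarrow> real" where
  "one_mass \<nu> = measure \<nu> {x. x 0}"

end

theory Submission
  imports Defs
begin

text \<open>
  Since the sequence is non-increasing, \<open>x\<^sub>\<infinity> \<le> x\<^sub>K\<close> coordinatewise, so the positions where
  the two configurations differ are exactly the positions where \<open>x\<^sub>K\<close> is 1 and \<open>x\<^sub>\<infinity>\<close> is 0;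
  along \<open>(N\<^sub>i)\<close> this set has density \<open>\<nu>\<^sub>K(1) - \<nu>\<^sub>\<infinity>(1)\<close>, and so has each of its translates.
  By compactness a continuous test function \<open>f\<close> is, up to \<open>\<epsilon>\<close>, determined by a finite window
  \<open>[-L, L]\<close>, so the orbit averages of \<open>f\<close> along \<open>x\<^sub>K\<close> and \<open>x\<^sub>\<infinity>\<close> differ by at most
  \<open>\<epsilon> + 2 sup|f| (2L + 1)(\<nu>\<^sub>K(1) - \<nu>\<^sub>\<infinity>(1))\<close>, and this bound passes to the limit measures.
\<close>

lemma compact_UNIV_config: "compact (UNIV :: config set)"
proof -
  have "compact_space (euclidean :: bool topology)"
    by (simp add: compact_space_def finite_imp_compact)
  then have "compact_space (product_topology (\<lambda>i::int. (euclidean :: bool topology)) UNIV)"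
    by (simp add: compact_space_product_topology)
  then show ?thesis
    by (simp add: euclidean_product_topology compact_space_def)
qed

definition cylinder :: "config \<Rightarrow> nat \<Rightarrow> config set" where
  "cylinder z L = {w. \<forall>m\<in>{-int L..int L}. w m = z m}"

lemma center_in_cylinder [simp]: "z \<in> cylinder z L"
  by (simp add: cylinder_def)

lemma cylinder_trans:
  "y \<in> cylinder x L' \<Longrightarrow> x \<in> cylinder z L \<Longrightarrow> L \<le> L' \<Longrightarrow> y \<in> cylinder z L"
  by (auto simp: cylinder_def)

lemma open_cylinder: "open (cylinder z L)"
proof -
  have "open {w::config. \<forall>m\<in>{-int L..int L}. w (id m) \<in> {z m}}"
    by (rule product_topology_basis') (simp_all add: discrete_topology_class.open_discrete)
  then show ?thesis
    by (simp add: cylinder_def)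
qed

lemma open_contains_cylinder:
  assumes "open (U :: config set)" "z \<in> U"
  obtains L where "cylinder z L \<subseteq> U"
proof -
  have "openin (product_topology (\<lambda>i. euclidean) UNIV) U"
    using assms(1) by (simp add: open_fun_def)
  from product_topology_open_contains_basis[OF this assms(2)]
  obtain X where X: "z \<in> (\<Pi>\<^sub>E i\<in>UNIV. X i)" "finite {i. X i \<noteq> UNIV}" "(\<Pi>\<^sub>E i\<in>UNIV. X i) \<subseteq> U"
    by auto
  obtain k where "\<And>i. X i \<noteq> UNIV \<Longrightarrow> \<bar>i\<bar> \<le> k"
    using bdd_above_finite[OF finite_imageI[OF X(2), of abs]] by (auto simp: bdd_above_def)
  then obtain L where L: "\<And>i. X i \<noteq> UNIV \<Longrightarrow> \<bar>i\<bar> \<le> int L"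
    by (metis nat_0_le abs_ge_zero order_trans)
  have "cylinder z L \<subseteq> (\<Pi>\<^sub>E i\<in>UNIV. X i)"
  proof
    fix w assume w: "w \<in> cylinder z L"
    have "w i \<in> X i" for i
    proof (cases "X i = UNIV")
      case False
      then have "w i = z i"
        using L[of i] w by (simp add: cylinder_def abs_le_iff)
      then show ?thesis
        using X(1) by auto
    qed simp
    then show "w \<in> (\<Pi>\<^sub>E i\<in>UNIV. X i)" by (simp add: PiE_iff)
  qed
  then show ?thesis
    using X(3) that by (meson order_trans)
qed

lemma continuous_config_uniformly_local:
  fixes f :: "config \<Rightarrow> real"
  assumes f: "continuous_on UNIV f" and e: "e > 0"
  obtains L where "\<And>y z. y \<in> cylinder z L \<Longrightarrow> \<bar>f y - f z\<bar> < e"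
proof -
  have "open (f -` ball (f z) (e/2))" for z
    using f by (intro open_vimage) simp_all
  moreover have "z \<in> f -` ball (f z) (e/2)" for z
    using e by simp
  ultimately have "\<forall>z. \<exists>L. cylinder z L \<subseteq> f -` ball (f z) (e/2)"
    by (meson open_contains_cylinder)
  then obtain R where R: "\<And>z. cylinder z (R z) \<subseteq> f -` ball (f z) (e/2)"
    by metis
  have "UNIV \<subseteq> (\<Union>z. cylinder z (R z))"
    by auto
  then obtain C where C: "finite C" "UNIV \<subseteq> (\<Union>z\<in>C. cylinder z (R z))"
    by (rule compactE_image[OF compact_UNIV_config open_cylinder])
  show ?thesis
  proof
    fix y z :: config
    assume yz: "y \<in> cylinder z (Max (R ` C))"
    obtain c where c: "c \<in> C" "z \<in> cylinder c (R c)"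
      using C(2) by blast
    then have "R c \<le> Max (R ` C)"
      using C(1) by simp
    with yz c(2) have "y \<in> cylinder c (R c)"
      by (rule cylinder_trans)
    then have "dist (f y) (f c) < e/2" "dist (f z) (f c) < e/2"
      using R[of c] c(2) by (auto simp: dist_commute)
    then have "dist (f y) (f z) < e"
      by (rule dist_triangle_half_l)
    then show "\<bar>f y - f z\<bar> < e"
      by (simp add: dist_real_def)
  qed
qed

lemma abs_diff_le_of_steps:
  fixes S :: "int \<Rightarrow> real"
  assumes step: "\<And>j. \<bar>S (j + 1) - S j\<bar> \<le> c"
  shows "\<bar>S j - S 0\<bar> \<le> c * \<bar>of_int j\<bar>"
proof (induction j rule: int_induct[where k = 0])
  case (step1 i)
  then show ?case
    using step[of i] by (simp add: abs_le_iff algebra_simps)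
next
  case (step2 i)
  have "\<bar>S (i - 1) - S 0\<bar> \<le> \<bar>S i - S (i - 1)\<bar> + \<bar>S i - S 0\<bar>"
    by linarith
  then show ?case
    using step[of "i - 1"] step2 by (simp add: abs_of_nonpos algebra_simps)
qed simp

lemma sum_translate_diff_le:
  fixes u :: "int \<Rightarrow> real"
  assumes u: "\<And>m. \<bar>u m\<bar> \<le> 1"
  shows "\<bar>(\<Sum>n=1..N. u (int n + j)) - (\<Sum>n=1..N. u (int n))\<bar> \<le> 2 * \<bar>of_int j\<bar>"
proof -
  have "(\<Sum>n=1..N. u (int n + (j + 1))) - (\<Sum>n=1..N. u (int n + j)) = u (int N + j + 1) - u (j + 1)"
    for j by (induction N) (simp_all add: sum.cl_ivl_Suc algebra_simps)
  then have "\<bar>(\<Sum>n=1..N. u (int n + (j + 1))) - (\<Sum>n=1..N. u (int n + j))\<bar> \<le> 2" for j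
    using u[of "int N + j + 1"] u[of "j + 1"] by (simp add: abs_le_iff)
  from abs_diff_le_of_steps[of "\<lambda>j. \<Sum>n=1..N. u (int n + j)", OF this] show ?thesis
    by simp
qed

lemma density_translate_tendsto:
  fixes u :: "int \<Rightarrow> real"
  assumes u: "\<And>m. \<bar>u m\<bar> \<le> 1"
    and N: "filterlim N at_top sequentially"
    and density: "(\<lambda>i. (\<Sum>n=1..N i. u (int n)) / real (N i)) \<longlonglongrightarrow> a"
  shows "(\<lambda>i. (\<Sum>n=1..N i. u (int n + j)) / real (N i)) \<longlonglongrightarrow> a"
proof -
  have lim: "(\<lambda>i. 2 * \<bar>of_int j\<bar> / real (N i)) \<longlonglongrightarrow> 0"
    using filterlim_compose[OF filterlim_real_sequentially N]
    by (intro tendsto_divide_0[OF tendsto_const] filterlim_at_top_imp_at_infinity) (simp add: o_def)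
  have bound: "norm (((\<Sum>n=1..N i. u (int n + j)) - (\<Sum>n=1..N i. u (int n))) / real (N i))
      \<le> 2 * \<bar>of_int j\<bar> / real (N i)" for i
    unfolding real_norm_def abs_divide abs_of_nat
    using sum_translate_diff_le[where u = u and N = "N i" and j = j, OF u] by (rule divide_right_mono) simp
  have "(\<lambda>i. ((\<Sum>n=1..N i. u (int n + j)) - (\<Sum>n=1..N i. u (int n))) / real (N i)) \<longlonglongrightarrow> 0"
    using Lim_null_comparison[OF always_eventually[OF allI[OF bound]] lim] .
  from tendsto_add[OF density this] show ?thesis
    by (simp add: add_divide_distrib[symmetric])
qed

definition orbit_average :: "(nat \<Rightarrow> nat) \<Rightarrow> (config \<Rightarrow> real) \<Rightarrow> config \<Rightarrow> nat \<Rightarrow> real" where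
  "orbit_average N f x i = (\<Sum>n=1..N i. f ((shift ^^ n) x)) / real (N i)"

lemma funpow_shift: "(shift ^^ n) x = (\<lambda>m. x (m + int n))"
  by (induction n) (auto simp: shift_def algebra_simps)

lemma quasi_generic_along_tendsto:
  assumes "quasi_generic_along x N \<nu>" "continuous_on UNIV f" "bounded (range f)"
  shows "orbit_average N f x \<longlonglongrightarrow> integral\<^sup>L \<nu> f"
  using assms unfolding quasi_generic_along_def orbit_average_def by blast

lemma quasi_generic_along_density_one:
  assumes "quasi_generic_along x N \<nu>" "borel_prob \<nu>"
  shows "(\<lambda>i. (\<Sum>n=1..N i. of_bool (x (int n))) / real (N i)) \<longlonglongrightarrow> one_mass \<nu>"
proof -
  define g :: "config \<Rightarrow> real" where "g y = of_bool (y 0)" for y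
  have "continuous_on UNIV g"
    unfolding g_def by (rule continuous_on_compose2[of UNIV of_bool]) simp_all
  moreover have "bounded (range g)"
    unfolding bounded_iff g_def by (intro exI[of _ 1]) auto
  ultimately have "orbit_average N g x \<longlonglongrightarrow> integral\<^sup>L \<nu> g"
    by (rule quasi_generic_along_tendsto[OF assms(1)])
  moreover have "integral\<^sup>L \<nu> g = one_mass \<nu>"
  proof -
    have "space \<nu> = UNIV"
      using assms(2) sets_eq_imp_space_eq[of \<nu> borel] by (simp add: borel_prob_def)
    moreover have "g = indicator {y. y 0}"
      by (auto simp: g_def indicator_def)
    ultimately show ?thesis
      by (simp add: one_mass_def)
  qed
  moreover have "orbit_average N g x = (\<lambda>i. (\<Sum>n=1..N i. of_bool (x (int n))) / real (N i))"
    by (simp add: fun_eq_iff orbit_average_def g_def funpow_shift)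
  ultimately show ?thesis
    by metis
qed

lemma local_diff_le_disagreements:
  fixes f :: "config \<Rightarrow> real" and y z :: config
  assumes local: "\<And>y z. y \<in> cylinder z L \<Longrightarrow> \<bar>f y - f z\<bar> < e"
    and bound: "\<And>y. \<bar>f y\<bar> \<le> B"
    and below: "\<And>m. z m \<Longrightarrow> y m"
  shows "\<bar>f y - f z\<bar> \<le> e + 2 * B * (\<Sum>j\<in>{-int L..int L}. of_bool (y j) - of_bool (z j))"
proof -
  let ?D = "\<Sum>j\<in>{-int L..int L}. of_bool (y j) - of_bool (z j) :: real"
  have terms_nonneg: "of_bool (y j) - of_bool (z j) \<ge> (0::real)" for j
    using below[of j] by auto
  have "B \<ge> 0"
    using bound[of y] by linarith
  show ?thesis
  proof (cases "y \<in> cylinder z L")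
    case True
    have "0 \<le> 2 * B * ?D"
      using \<open>B \<ge> 0\<close> terms_nonneg by (simp add: sum_nonneg)
    then show ?thesis
      using local[OF True] by linarith
  next
    case False
    then obtain j where j: "j \<in> {-int L..int L}" "y j \<noteq> z j"
      unfolding cylinder_def by blast
    have "1 \<le> ?D"
      using member_le_sum[where f = "\<lambda>j. of_bool (y j) - of_bool (z j)", OF j(1) terms_nonneg]
        j(2) below[of j] by auto
    then have "2 * B \<le> 2 * B * ?D"
      using mult_left_mono[of 1 ?D "2 * B"] \<open>B \<ge> 0\<close> by simp
    moreover have "e > 0"
      using local[of z z] by simp
    moreover have "\<bar>f y - f z\<bar> \<le> 2 * B"
      using bound[of y] bound[of z] by linarith
    ultimately show ?thesis
      by linarith
  qed
qed

lemma abs_average_diff_le: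
  fixes a b c :: "nat \<Rightarrow> real"
  assumes "\<And>n. n \<in> A \<Longrightarrow> \<bar>a n - b n\<bar> \<le> c n" and "k \<ge> 0"
  shows "\<bar>(\<Sum>n\<in>A. a n) / k - (\<Sum>n\<in>A. b n) / k\<bar> \<le> (\<Sum>n\<in>A. c n) / k"
proof -
  have "\<bar>(\<Sum>n\<in>A. a n) / k - (\<Sum>n\<in>A. b n) / k\<bar> = \<bar>\<Sum>n\<in>A. a n - b n\<bar> / k"
    using \<open>k \<ge> 0\<close> by (simp add: sum_subtractf diff_divide_distrib[symmetric])
  also have "\<dots> \<le> (\<Sum>n\<in>A. c n) / k"
    using assms by (intro divide_right_mono order_trans[OF sum_abs sum_mono])
  finally show ?thesis .
qed

lemma integral_diff_le_one_mass_gap: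
  fixes y z :: config and f :: "config \<Rightarrow> real"
  assumes below: "\<And>m. z m \<Longrightarrow> y m"
    and N: "strict_mono N"
    and qy: "quasi_generic_along y N \<mu>" and qz: "quasi_generic_along z N \<nu>"
    and \<mu>: "borel_prob \<mu>" and \<nu>: "borel_prob \<nu>"
    and f: "continuous_on UNIV f" "bounded (range f)"
    and bound: "\<And>y. \<bar>f y\<bar> \<le> B"
    and local: "\<And>y z. y \<in> cylinder z L \<Longrightarrow> \<bar>f y - f z\<bar> < e"
  shows "\<bar>integral\<^sup>L \<mu> f - integral\<^sup>L \<nu> f\<bar> \<le> e + 2 * B * real (2 * L + 1) * (one_mass \<mu> - one_mass \<nu>)"
proof -
  define d :: "int \<Rightarrow> real" where "d m = of_bool (y m) - of_bool (z m)" for m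
  define J where "J = {-int L..int L}"
  have d_bound: "\<bar>d m\<bar> \<le> 1" for m
    by (simp add: d_def)
  have "(\<lambda>i. (\<Sum>n=1..N i. d (int n)) / real (N i)) \<longlonglongrightarrow> one_mass \<mu> - one_mass \<nu>"
    unfolding d_def sum_subtractf diff_divide_distrib
    by (intro tendsto_diff quasi_generic_along_density_one qy qz \<mu> \<nu>)
  then have "(\<lambda>i. (\<Sum>n=1..N i. d (int n + j)) / real (N i)) \<longlonglongrightarrow> one_mass \<mu> - one_mass \<nu>" for j
    by (rule density_translate_tendsto[where u = d, OF d_bound filterlim_subseq[OF N]])
  then have upper_lim: "(\<lambda>i. e + 2 * B * (\<Sum>j\<in>J. (\<Sum>n=1..N i. d (int n + j)) / real (N i)))
      \<longlonglongrightarrow> e + 2 * B * (\<Sum>j\<in>J. one_mass \<mu> - one_mass \<nu>)"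
    by (intro tendsto_intros)
  have diff_lim: "(\<lambda>i. \<bar>orbit_average N f y i - orbit_average N f z i\<bar>)
      \<longlonglongrightarrow> \<bar>integral\<^sup>L \<mu> f - integral\<^sup>L \<nu> f\<bar>"
    by (intro tendsto_intros quasi_generic_along_tendsto qy qz f)
  have pointwise: "\<bar>f ((shift ^^ n) y) - f ((shift ^^ n) z)\<bar> \<le> e + 2 * B * (\<Sum>j\<in>J. d (int n + j))" for n
  proof -
    have "\<And>m. (shift ^^ n) z m \<Longrightarrow> (shift ^^ n) y m"
      using below by (simp add: funpow_shift)
    from local_diff_le_disagreements[OF local bound this] show ?thesis
      unfolding funpow_shift d_def J_def by (simp only: add.commute)
  qed
  have "\<bar>orbit_average N f y i - orbit_average N f z i\<bar>
      \<le> e + 2 * B * (\<Sum>j\<in>J. (\<Sum>n=1..N i. d (int n + j)) / real (N i))" if "N i > 0" for i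
  proof -
    have "\<bar>orbit_average N f y i - orbit_average N f z i\<bar>
        \<le> (\<Sum>n=1..N i. e + 2 * B * (\<Sum>j\<in>J. d (int n + j))) / real (N i)"
      unfolding orbit_average_def by (rule abs_average_diff_le[OF pointwise]) simp
    also have "\<dots> = e + 2 * B * (\<Sum>j\<in>J. (\<Sum>n=1..N i. d (int n + j)) / real (N i))"
      using that by (simp add: sum.distrib sum_distrib_left sum.swap[of _ J] sum_divide_distrib
          add_divide_distrib)
    finally show ?thesis .
  qed
  moreover have "\<forall>\<^sub>F i in sequentially. N i > 0"
    using seq_suble[OF N] by (intro eventually_sequentiallyI[of 1]) (metis le_trans less_one not_le)
  ultimately have "\<bar>integral\<^sup>L \<mu> f - integral\<^sup>L \<nu> f\<bar> \<le> e + 2 * B * (\<Sum>j\<in>J. one_mass \<mu> - one_mass \<nu>)"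
    by (intro tendsto_le[OF trivial_limit_sequentially upper_lim diff_lim]) (auto elim: eventually_mono)
  then show ?thesis
    by (simp add: J_def algebra_simps)
qed

lemma tendsto_if_approx_bounds:
  fixes a g :: "nat \<Rightarrow> real"
  assumes g: "g \<longlonglongrightarrow> 0"
    and bound: "\<And>e. e > 0 \<Longrightarrow> \<exists>C. \<forall>K. \<bar>a K - l\<bar> \<le> e + C * g K"
  shows "a \<longlonglongrightarrow> l"
  unfolding tendsto_iff
proof (intro allI impI)
  fix r :: real assume "r > 0"
  then obtain C where C: "\<And>K. \<bar>a K - l\<bar> \<le> r/2 + C * g K"
    using bound[of "r/2"] by auto
  have "(\<lambda>K. \<bar>C * g K\<bar>) \<longlonglongrightarrow> 0"
    using tendsto_rabs_zero[OF tendsto_mult_right_zero[OF g]] .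
  then have "\<forall>\<^sub>F K in sequentially. \<bar>C * g K\<bar> < r/2"
    using \<open>r > 0\<close> by (intro order_tendstoD(2)) auto
  then show "\<forall>\<^sub>F K in sequentially. dist (a K) l < r"
  proof (rule eventually_mono)
    fix K assume "\<bar>C * g K\<bar> < r/2"
    then show "dist (a K) l < r"
      using C[of K] by (simp add: dist_real_def)
  qed
qed

theorem lemma3p8:
  fixes x :: "nat \<Rightarrow> config" and xinf :: config
    and N :: "nat \<Rightarrow> nat"
    and \<nu> :: "nat \<Rightarrow> config measure" and \<nu>inf :: "config measure"
  assumes noninc: "\<And>K m. x (Suc K) m \<longrightarrow> x K m"
    and lim: "\<And>m. ((\<lambda>K. x K m) \<longlongrightarrow> xinf m) sequentially"
    and N_mono: "strict_mono N"
    and \<nu>_prob: "\<And>K. borel_prob (\<nu> K)" and \<nu>inf_prob: "borel_prob \<nu>inf"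
    and qg: "\<And>K. quasi_generic_along (x K) N (\<nu> K)"
    and qginf: "quasi_generic_along xinf N \<nu>inf"
    and mass: "((\<lambda>K. one_mass (\<nu> K)) \<longlongrightarrow> one_mass \<nu>inf) sequentially"
  shows "weak_conv \<nu> \<nu>inf"
  unfolding weak_conv_def
proof (intro allI impI)
  have "decseq (\<lambda>K. x K m)" for m
    using noninc by (intro decseq_SucI) (simp add: le_bool_def)
  then have below: "xinf m \<Longrightarrow> x K m" for K m
    using decseq_ge[OF _ lim] by (simp add: le_bool_def)
  fix f :: "config \<Rightarrow> real"
  assume f: "continuous_on UNIV f" "bounded (range f)"
  then obtain B where B: "\<And>y. \<bar>f y\<bar> \<le> B"
    unfolding bounded_iff by auto
  show "(\<lambda>K. integral\<^sup>L (\<nu> K) f) \<longlonglongrightarrow> integral\<^sup>L \<nu>inf f"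
  proof (rule tendsto_if_approx_bounds)
    show "(\<lambda>K. one_mass (\<nu> K) - one_mass \<nu>inf) \<longlonglongrightarrow> 0"
      using mass by (rule LIM_zero)
    fix e :: real
    assume "e > 0"
    then obtain L where "\<And>y z. y \<in> cylinder z L \<Longrightarrow> \<bar>f y - f z\<bar> < e"
      using continuous_config_uniformly_local[OF f(1)] by blast
    from integral_diff_le_one_mass_gap[OF below N_mono qg qginf \<nu>_prob \<nu>inf_prob f B this]
    show "\<exists>C. \<forall>K. \<bar>integral\<^sup>L (\<nu> K) f - integral\<^sup>L \<nu>inf f\<bar> \<le> e + C * (one_mass (\<nu> K) - one_mass \<nu>inf)"
      by (intro exI[of _ "2 * B * real (2 * L + 1)"] allI)
  qed
qed

end
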